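(* Let $n\ge 3$ and let $X_n$ be the doubled regular $n$-gon. Let $\gamma\colon S^1\to X_n$ be an over-under curve between adjacent edges on $X_n$. Then: (1) if $n$ is even, $\gamma$ is a $1/n$-geodesic; (2) if $n$ is odd, $\gamma$ is a $1/2n$-geodesic.
   Context: The doubled regular $n$-gon $X_n$ is the metric space obtained by gluing two congruent regular $n$-gons (a "top face" and a "bottom face") along their common boundary edges. The distance between two points on the same face is the Euclidean distance; the distance between points $x,y$ on opposite faces is $\min_z\{d(x,z)+d(z,y)\}$, where $d$ is the Euclidean distance on each face and $z$ ranges over the boundary (edge) points. A geodesic is a locally length-minimizing curve; a closed geodesic is a map $\gamma\colon S^1\to X_n$ that is locally length minimizing at every $t\in S^1$. Geodesics are straight segments within each face and, when crossing an edge from one face to the other, reflect like billiard paths (angle of incidence equals angle of reflection). An over-under curve between adjacent edges is the closed geodesic (parametrized with constant speed and traversed once until it closes up smoothly) that passes through the midpoints of adjacent edges: its segments join the midpoints of consecutive adjacent edges, alternately on the top and bottom faces. (For $n$ even it closes smoothly after $n$ segments; for $n$ odd it needs $2n$ segments.) For $k\in\mathbb{N}$, a $1/k$-geodesic is a constant speed closed geodesic $\gamma\colon S^1\to X_n$ of length $L$ that minimizes on all subintervals of length $L/k$, i.e. for every subinterval of $S^1$ on which $\gamma$ has length $L/k$, the length of $\gamma$ restricted to it equals the distance in $X_n$ between its endpoints. *)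

theory Defs
  imports "HOL-Analysis.Analysis"
begin

text \<open>Vertices of the regular n-gon inscribed in the unit circle (indices are integers,
  taken mod n automatically by periodicity of cis).\<close>
definition vertex :: "nat \<Rightarrow> int \<Rightarrow> complex" where
  "vertex n k = cis (2 * pi * real_of_int k / real n)"

definition polygon :: "nat \<Rightarrow> complex set" where
  "polygon n = convex hull {vertex n (int k) | k. k < n}"

text \<open>A point of X_n is a pair (face, position); True = top face, False = bottom face.
  Points on the boundary of the two faces are identified (their distance is 0).\<close>
definition XN :: "nat \<Rightarrow> (bool \<times> complex) set" where
  "XN n = {(b, p). p \<in> polygon n}"

definition dX :: "nat \<Rightarrow> bool \<times> complex \<Rightarrow> bool \<times> complex \<Rightarrow> real" where
  "dX n x y = (if fst x = fst y then dist (snd x) (snd y)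
               else Inf {dist (snd x) z + dist z (snd y) | z. z \<in> frontier (polygon n)})"

section \<open>Lengths and geodesics (curves on S^1 = R/Z, i.e. 1-periodic maps R \<to> X_n)\<close>

definition curve_length :: "nat \<Rightarrow> (real \<Rightarrow> bool \<times> complex) \<Rightarrow> real \<Rightarrow> real \<Rightarrow> real" where
  "curve_length n \<gamma> a b = Sup {(\<Sum>i<m. dX n (\<gamma> (t i)) (\<gamma> (t (Suc i)))) | t m.
       t 0 = a \<and> t m = b \<and> (\<forall>i<m. t i \<le> t (Suc i))}"

definition closed_curve :: "nat \<Rightarrow> (real \<Rightarrow> bool \<times> complex) \<Rightarrow> bool" where
  "closed_curve n \<gamma> \<longleftrightarrow> (\<forall>t. \<gamma> t \<in> XN n) \<and> (\<forall>t. \<gamma> (t + 1) = \<gamma> t)"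

definition total_length :: "nat \<Rightarrow> (real \<Rightarrow> bool \<times> complex) \<Rightarrow> real" where
  "total_length n \<gamma> = curve_length n \<gamma> 0 1"

definition constant_speed :: "nat \<Rightarrow> (real \<Rightarrow> bool \<times> complex) \<Rightarrow> bool" where
  "constant_speed n \<gamma> \<longleftrightarrow>
     (\<forall>a b. a \<le> b \<longrightarrow> curve_length n \<gamma> a b = (b - a) * total_length n \<gamma>)"

definition locally_minimizing_at :: "nat \<Rightarrow> (real \<Rightarrow> bool \<times> complex) \<Rightarrow> real \<Rightarrow> bool" where
  "locally_minimizing_at n \<gamma> t \<longleftrightarrow> (\<exists>\<epsilon>>0. \<forall>a b. t - \<epsilon> \<le> a \<longrightarrow> a \<le> b \<longrightarrow> b \<le> t + \<epsilon> \<longrightarrow>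
       curve_length n \<gamma> a b = dX n (\<gamma> a) (\<gamma> b))"

definition closed_geodesic :: "nat \<Rightarrow> (real \<Rightarrow> bool \<times> complex) \<Rightarrow> bool" where
  "closed_geodesic n \<gamma> \<longleftrightarrow> closed_curve n \<gamma> \<and> (\<forall>t. locally_minimizing_at n \<gamma> t)"

text \<open>1/k-geodesic: constant speed closed geodesic of length L > 0 minimizing on every
  parameter subinterval of length 1/k (equivalently, of curve length L/k).\<close>
definition one_over_k_geodesic :: "nat \<Rightarrow> (real \<Rightarrow> bool \<times> complex) \<Rightarrow> nat \<Rightarrow> bool" where
  "one_over_k_geodesic n \<gamma> k \<longleftrightarrow> closed_geodesic n \<gamma> \<and> constant_speed n \<gamma> \<and>
     0 < total_length n \<gamma> \<and>
     (\<forall>a. curve_length n \<gamma> a (a + 1 / real k) = dX n (\<gamma> a) (\<gamma> (a + 1 / real k)))"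

definition edge_mid :: "nat \<Rightarrow> int \<Rightarrow> complex" where
  "edge_mid n e = (vertex n e + vertex n (e + 1)) / 2"

text \<open>Unit-parameter-per-segment version: segment number k (k = floor s) joins the midpoint
  of edge j + sigma*k to that of edge j + sigma*(k+1), on face b XOR (k odd).
  sigma = 1 or -1 gives the orientation, b the starting face.\<close>
definition over_under_base :: "nat \<Rightarrow> int \<Rightarrow> int \<Rightarrow> bool \<Rightarrow> real \<Rightarrow> bool \<times> complex" where
  "over_under_base n j \<sigma> b s =
     (let k = \<lfloor>s\<rfloor>; u = s - real_of_int k;
          p = edge_mid n (j + \<sigma> * k); q = edge_mid n (j + \<sigma> * (k + 1))
      in (b \<noteq> odd k, p + complex_of_real u * (q - p)))"

text \<open>Number of segments until the curve closes up smoothly.\<close>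
definition num_segments :: "nat \<Rightarrow> nat" where
  "num_segments n = (if even n then n else 2 * n)"

text \<open>Over-under curve parametrized on S^1 = R/Z with constant speed, traversed once,
  with arbitrary starting edge j, orientation sigma, starting face b and phase c.\<close>
definition over_under :: "nat \<Rightarrow> int \<Rightarrow> int \<Rightarrow> bool \<Rightarrow> real \<Rightarrow> real \<Rightarrow> bool \<times> complex" where
  "over_under n j \<sigma> b c t = over_under_base n j \<sigma> b (real (num_segments n) * t + c)"

end

(*
  Each segment of an over-under curve joins the midpoints of two adjacent edges on one face,
  so two points of the same segment are at Euclidean distance. Two points p, q of consecutive
  segments lie on opposite faces, and a shortest path between them passes through a boundary
  point z. Every boundary point lies on or beyond the line of some edge; reflecting q in that
  line does not increase |z - q|, and an explicit trigonometric inequality shows that the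
  distance from p to the reflected point is at least |p - M| + |M - q|, where M is the edge
  midpoint shared by the two segments. Hence the curve realises the distance on every parameter
  interval covering at most one of its N segments (N = n or 2n), i.e. of length 1/N, and its
  length grows linearly with the parameter.
*)
theory Submission
  imports Defs
begin

section \<open>The regular polygon\<close>

lemma cis_add_2pi_int: "cis (x + 2 * pi * of_int m) = cis x"
  by (simp add: cis_mult[symmetric])

lemma cos_add_2pi_int: "cos (x + 2 * pi * of_int m) = cos x"
  by (metis cis.sel(1) cis_add_2pi_int)

lemma cos_pi_div_pos:
  fixes n :: nat
  assumes "n \<ge> 3"
  shows "cos (pi / n) > 0"
proof (rule cos_gt_zero_pi)
  have "pi / n \<le> pi / 3" using assms by (intro divide_left_mono) auto
  then show "pi / n < pi / 2" using pi_gt_zero by linarith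
  have "0 < pi / n" using assms by simp
  then show "- (pi / 2) < pi / n" using pi_gt_zero by linarith
qed

lemma sin_pi_div_pos:
  fixes n :: nat
  assumes "n \<ge> 2"
  shows "sin (pi / n) > 0"
proof (rule sin_gt_zero)
  have "pi / n \<le> pi / 2" using assms by (intro divide_left_mono) auto
  then show "pi / n < pi" using pi_gt_zero by linarith
qed (use assms in auto)

lemma inner_of_real_cis: "inner (of_real r * cis a) (of_real s * cis b) = r * s * cos (a - b)"
  by (simp add: inner_complex_def cos_diff algebra_simps)

lemma inner_of_real_cis_cis: "inner (of_real r * cis a) (cis b) = r * cos (a - b)"
  using inner_of_real_cis[of r a 1 b] by simp

lemma cos_odd_multiple_le:
  fixes n :: nat
  assumes "n \<ge> 1"
  shows "cos (of_int (2 * m + 1) * pi / n) \<le> cos (pi / n)"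
proof -
  define q where "q = (2 * m + 1) div (2 * int n)"
  define r where "r = (2 * m + 1) mod (2 * int n)"
  define s where "s = min r (2 * int n - r)"
  have np: "real n > 0" using assms by simp
  have "odd r" unfolding r_def by (simp add: dvd_mod_iff)
  then have "r \<noteq> 0" by auto
  moreover have "0 \<le> r" "r < 2 * int n" unfolding r_def using assms by simp_all
  ultimately have s: "1 \<le> s" "s \<le> int n" unfolding s_def by linarith+
  have "2 * m + 1 = r + 2 * int n * q" unfolding r_def q_def by simp
  then have "of_int (2 * m + 1) * pi / n = of_int r * pi / n + 2 * pi * of_int q"
    using np by (simp add: field_simps)
  then have "cos (of_int (2 * m + 1) * pi / n) = cos (of_int r * pi / n)"
    by (simp add: cos_add_2pi_int)
  also have "\<dots> = cos (of_int s * pi / n)"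
  proof (cases "s = r")
    case False
    then have "s = 2 * int n - r" unfolding s_def by linarith
    then have "real_of_int s = 2 * real n - of_int r" by simp
    then have "of_int s * pi / n = 2 * pi - of_int r * pi / n"
      using np by (simp add: diff_divide_distrib left_diff_distrib)
    then show ?thesis by simp
  qed simp
  also have "\<dots> \<le> cos (pi / n)"
  proof (rule cos_monotone_0_pi_le)
    show "0 \<le> pi / n" "pi / n \<le> of_int s * pi / n"
      using s np by (simp_all add: divide_right_mono)
    have "real_of_int s \<le> real n" using s by linarith
    then show "of_int s * pi / n \<le> pi" using np by (simp add: field_simps)
  qed
  finally show ?thesis .
qed

lemma vertex_add_multiple:
  assumes "n > 0"
  shows "vertex n (k + int n * m) = vertex n k"
proof -
  have "2 * pi * real_of_int (k + int n * m) / n = 2 * pi * of_int k / n + 2 * pi * of_int m"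
    using assms by (simp add: field_simps)
  then show ?thesis unfolding vertex_def by (simp add: cis_add_2pi_int)
qed

lemma vertex_in_polygon:
  assumes "n > 0"
  shows "vertex n k \<in> polygon n"
proof -
  obtain i where i: "k mod int n = int i" "i < n"
    using assms by (metis int_nat_eq mod_int_pos_iff nat_less_iff of_nat_0_less_iff pos_mod_bound)
  have "vertex n k = vertex n (int i)"
    using vertex_add_multiple[OF assms, of "k mod int n" "k div int n"]
    by (simp only: mod_mult_div_eq flip: i(1))
  then show ?thesis unfolding polygon_def using i(2) by (auto intro: hull_inc)
qed

lemma convex_polygon: "convex (polygon n)"
  unfolding polygon_def by (rule convex_convex_hull)

lemma sum_vertices_eq_0:
  assumes "n \<ge> 2"
  shows "(\<Sum>k<n. vertex n (int k)) = 0"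
proof -
  define w where "w = cis (2 * pi / n)"
  have np: "real n > 0" using assms by simp
  have "vertex n (int k) = w ^ k" for k
  proof -
    have "w ^ k = cis (real k * (2 * pi / n))" unfolding w_def by (rule Complex.DeMoivre)
    then show ?thesis unfolding vertex_def by (simp add: mult.commute)
  qed
  moreover have "w \<noteq> 1"
  proof
    assume "w = 1"
    then have "cos (2 * pi / n) = cos 0" unfolding w_def by (metis cis.sel(1) cos_zero one_complex.sel(1))
    moreover have "cos (2 * pi / n) < cos 0"
    proof (rule cos_monotone_0_pi)
      have "2 * pi \<le> real n * pi" using assms by simp
      then show "2 * pi / n \<le> pi" using np by (simp add: field_simps)
    qed (use np in simp_all)
    ultimately show False by simp
  qed
  moreover have "w ^ n = 1" unfolding w_def Complex.DeMoivre using np by simp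
  ultimately show ?thesis by (simp add: sum_gp_strict)
qed

lemma zero_in_polygon:
  assumes "n \<ge> 2"
  shows "0 \<in> polygon n"
proof -
  have "(\<Sum>k<n. (1 / real n) *\<^sub>R vertex n (int k)) \<in> polygon n"
    by (rule convex_sum) (use assms vertex_in_polygon convex_polygon in auto)
  then show ?thesis using sum_vertices_eq_0[OF assms] by (simp add: scaleR_sum_right[symmetric])
qed

definition edge_normal :: "nat \<Rightarrow> int \<Rightarrow> complex" where
  "edge_normal n f = cis ((2 * of_int f + 1) * pi / n)"

lemma edge_normal_add_multiple:
  assumes "n > 0"
  shows "edge_normal n (f + int n * m) = edge_normal n f"
proof -
  have "(2 * real_of_int (f + int n * m) + 1) * pi / n = (2 * of_int f + 1) * pi / n + 2 * pi * of_int m"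
    using assms by (simp add: field_simps)
  then show ?thesis unfolding edge_normal_def by (simp add: cis_add_2pi_int)
qed

lemma cis_add_cis_double: "cis a + cis (a + 2 * t) = of_real (2 * cos t) * cis (a + t)"
proof -
  have "cis (a + 2 * t) = cis (a + t) * cis t" "cis a = cis (a + t) * cis (- t)"
    by (simp_all only: cis_mult) (simp_all add: algebra_simps)
  then show ?thesis by (simp add: complex_eq_iff algebra_simps)
qed

lemma edge_mid_eq_edge_normal:
  assumes "n > 0"
  shows "edge_mid n e = of_real (cos (pi / n)) * edge_normal n e"
proof -
  define a where "a = 2 * pi * of_int e / n"
  have a: "a + pi / n = (2 * of_int e + 1) * pi / n"
    unfolding a_def using assms by (simp add: field_simps)
  have "edge_mid n e = (cis a + cis (a + 2 * (pi / n))) / 2"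
    unfolding edge_mid_def vertex_def a_def by (simp add: add_divide_distrib algebra_simps)
  also have "\<dots> = of_real (cos (pi / n)) * cis (a + pi / n)"
    by (simp only: cis_add_cis_double) simp
  also have "\<dots> = of_real (cos (pi / n)) * edge_normal n e"
    unfolding edge_normal_def a ..
  finally show ?thesis .
qed

lemma edge_mid_in_polygon:
  assumes "n > 0"
  shows "edge_mid n e \<in> polygon n"
proof -
  have "(1/2) *\<^sub>R vertex n e + (1 - 1/2) *\<^sub>R vertex n (e + 1) \<in> polygon n"
    by (rule convexD[OF convex_polygon]) (use vertex_in_polygon[OF assms] in auto)
  then show ?thesis unfolding edge_mid_def by (simp add: scaleR_conv_of_real field_simps)
qed

lemma inner_vertex_edge_normal:
  assumes "n > 0"
  shows "inner (vertex n k) (edge_normal n k) = cos (pi / n)"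
    and "inner (vertex n (k + 1)) (edge_normal n k) = cos (pi / n)"
proof -
  have "2 * pi * of_int k / n - (2 * of_int k + 1) * pi / n = - (pi / n)"
    "2 * pi * of_int (k + 1) / n - (2 * of_int k + 1) * pi / n = pi / n"
    using assms by (simp_all add: field_simps)
  then show "inner (vertex n k) (edge_normal n k) = cos (pi / n)"
    "inner (vertex n (k + 1)) (edge_normal n k) = cos (pi / n)"
    unfolding vertex_def edge_normal_def using inner_of_real_cis[of 1 _ 1] by simp_all
qed

lemma inner_edge_normal_le:
  assumes "n \<ge> 1" and "z \<in> polygon n"
  shows "inner z (edge_normal n f) \<le> cos (pi / n)"
proof -
  have "polygon n \<subseteq> {z. inner z (edge_normal n f) \<le> cos (pi / n)}"
    unfolding polygon_def
  proof (rule hull_minimal)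
    show "convex {z. inner z (edge_normal n f) \<le> cos (pi / n)}"
      using convex_halfspace_le[of "edge_normal n f"] by (simp add: inner_commute)
    show "{vertex n (int k) |k. k < n} \<subseteq> {z. inner z (edge_normal n f) \<le> cos (pi / n)}"
    proof safe
      fix k :: nat
      have "2 * pi * real k / n - (2 * of_int f + 1) * pi / n = of_int (2 * (int k - f - 1) + 1) * pi / n"
        by (simp add: diff_divide_distrib[symmetric] algebra_simps)
      then have "inner (vertex n (int k)) (edge_normal n f) = cos (of_int (2 * (int k - f - 1) + 1) * pi / n)"
        unfolding vertex_def edge_normal_def using inner_of_real_cis[of 1 _ 1] by simp
      also have "\<dots> \<le> cos (pi / n)" by (rule cos_odd_multiple_le[OF assms(1)])
      finally show "inner (vertex n (int k)) (edge_normal n f) \<le> cos (pi / n)" .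
    qed
  qed
  then show ?thesis using assms(2) by auto
qed

lemma edge_mid_in_frontier:
  assumes "n > 0"
  shows "edge_mid n e \<in> frontier (polygon n)"
proof -
  have nN: "norm (edge_normal n e) = 1" unfolding edge_normal_def by simp
  have "edge_mid n e \<notin> interior (polygon n)"
  proof
    assume "edge_mid n e \<in> interior (polygon n)"
    then obtain \<epsilon> where \<epsilon>: "\<epsilon> > 0" "ball (edge_mid n e) \<epsilon> \<subseteq> polygon n"
      using mem_interior by blast
    define z where "z = edge_mid n e + (\<epsilon> / 2) *\<^sub>R edge_normal n e"
    have "z \<in> polygon n" using \<epsilon> nN unfolding z_def by (auto simp: dist_norm)
    then have "inner z (edge_normal n e) \<le> cos (pi / n)" using inner_edge_normal_le assms by simp
    moreover have "inner z (edge_normal n e) = cos (pi / n) + \<epsilon> / 2"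
      unfolding z_def edge_mid_eq_edge_normal[OF assms] using nN
      by (simp add: inner_add_left power2_norm_eq_inner[symmetric] flip: scaleR_conv_of_real)
    ultimately show False using \<epsilon>(1) by simp
  qed
  then show ?thesis
    unfolding frontier_def using edge_mid_in_polygon[OF assms] closure_subset by blast
qed

lemma cone_of_consecutive_vertices:
  assumes "n \<ge> 3"
  obtains k a b where "0 \<le> a" "0 \<le> b" "z = a *\<^sub>R vertex n k + b *\<^sub>R vertex n (k + 1)"
proof -
  define t where "t = pi / n"
  have np: "real n > 0" using assms by simp
  have "t \<le> pi / 3" unfolding t_def by (rule divide_left_mono) (use assms in auto)
  then have t: "0 < t" "t \<le> pi / 3" unfolding t_def using np by simp_all
  have s2: "sin (2 * t) > 0" by (rule sin_gt_zero) (use t in auto)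
  define \<rho> where "\<rho> = cmod z"
  define \<tau> where "\<tau> = Arg z"
  define k where "k = \<lfloor>\<tau> / (2 * t)\<rfloor>"
  define l where "l = \<tau> - 2 * t * of_int k"
  have "of_int k \<le> \<tau> / (2 * t)" "\<tau> / (2 * t) < of_int k + 1" unfolding k_def by linarith+
  then have l: "0 \<le> l" "l < 2 * t" unfolding l_def using t by (simp_all add: field_simps)
  define a where "a = \<rho> * sin (2 * t - l) / sin (2 * t)"
  define b where "b = \<rho> * sin l / sin (2 * t)"
  have "0 \<le> sin (2 * t - l)" "0 \<le> sin l" by (rule sin_ge_zero; use l t in linarith)+
  then have ab: "0 \<le> a" "0 \<le> b" unfolding a_def b_def \<rho>_def using s2 by simp_all
  have "\<rho> * cos l = a + b * cos (2 * t)" "\<rho> * sin l = b * sin (2 * t)"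
    unfolding a_def b_def sin_diff using s2 by (simp_all add: field_simps)
  then have "of_real \<rho> * cis l = of_real a + of_real b * cis (2 * t)"
    by (simp add: complex_eq_iff)
  moreover have "z = cis (2 * t * of_int k) * (of_real \<rho> * cis l)"
  proof -
    have "cis (2 * t * of_int k) * cis l = cis \<tau>" unfolding l_def cis_mult by simp
    then show ?thesis
      using rcis_cmod_Arg[of z] unfolding \<rho>_def \<tau>_def rcis_def by (metis mult.left_commute)
  qed
  moreover have "vertex n k = cis (2 * t * of_int k)"
    "vertex n (k + 1) = cis (2 * t * of_int k) * cis (2 * t)"
    unfolding vertex_def t_def cis_mult using np by (simp_all add: field_simps)
  ultimately have "z = a *\<^sub>R vertex n k + b *\<^sub>R vertex n (k + 1)"
    by (simp add: scaleR_conv_of_real algebra_simps)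
  with ab that show ?thesis by blast
qed

lemma in_polygon_if_inner_edge_normal_less:
  assumes "n \<ge> 3" and less: "\<And>f. inner z (edge_normal n f) < cos (pi / n)"
  shows "z \<in> polygon n"
proof -
  have np: "n > 0" using assms by simp
  obtain k a b where ab: "0 \<le> a" "0 \<le> b" and z: "z = a *\<^sub>R vertex n k + b *\<^sub>R vertex n (k + 1)"
    using cone_of_consecutive_vertices[OF assms(1)] .
  have "inner z (edge_normal n k) = (a + b) * cos (pi / n)"
    unfolding z inner_add_left inner_scaleR_left inner_vertex_edge_normal[OF np]
    by (simp add: algebra_simps)
  moreover have "cos (pi / n) > 0" using cos_pi_div_pos[OF assms(1)] .
  ultimately have "a + b < 1" using less[of k] by simp
  have "z \<in> convex hull {0, vertex n k, vertex n (k + 1)}"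
    unfolding convex_hull_3 using ab \<open>a + b < 1\<close> z
    by (intro CollectI exI[of _ "1 - a - b"] exI[of _ a] exI[of _ b]) auto
  moreover have "convex hull {0, vertex n k, vertex n (k + 1)} \<subseteq> polygon n"
    by (rule hull_minimal)
      (use zero_in_polygon[of n] assms(1) vertex_in_polygon[OF np] convex_polygon in auto)
  ultimately show ?thesis by blast
qed

lemma frontier_polygon_inner_edge_normal_ge:
  assumes "n \<ge> 3" and "z \<in> frontier (polygon n)"
  shows "\<exists>f. inner z (edge_normal n f) \<ge> cos (pi / n)"
proof (rule ccontr)
  assume "\<nexists>f. inner z (edge_normal n f) \<ge> cos (pi / n)"
  then have less: "inner z (edge_normal n f) < cos (pi / n)" for f by (simp add: not_le)
  define U where "U = (\<Inter>f\<in>{0..<int n}. {x. inner (edge_normal n f) x < cos (pi / n)})"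
  have np: "n > 0" using assms by simp
  have "U \<subseteq> polygon n"
  proof
    fix x assume "x \<in> U"
    then have "inner x (edge_normal n (f mod int n)) < cos (pi / n)" for f
      using np unfolding U_def by (auto simp: inner_commute)
    moreover have "edge_normal n (f mod int n) = edge_normal n f" for f
      using edge_normal_add_multiple[OF np, of "f mod int n" "f div int n"]
      by (simp only: mod_mult_div_eq)
    ultimately show "x \<in> polygon n"
      using in_polygon_if_inner_edge_normal_less[OF assms(1)] by simp
  qed
  moreover have "open U" unfolding U_def by (auto intro: open_halfspace_lt)
  ultimately have "U \<subseteq> interior (polygon n)" by (rule interior_maximal)
  moreover have "z \<in> U" unfolding U_def using less by (auto simp: inner_commute)
  ultimately show False using assms(2) unfolding frontier_def by blast
qed

section \<open>Unfolding across an edge line\<close>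

lemma sin_sq_interpolation_product_ge:
  fixes x y \<alpha> \<beta> :: real
  assumes "0 \<le> x" "0 \<le> y" "x + y \<le> 1"
  shows "x * y * sin \<alpha> ^ 4 \<le>
    (x * sin (\<beta> - \<alpha>) ^ 2 + (1 - x) * sin \<beta> ^ 2) * ((1 - y) * sin \<beta> ^ 2 + y * sin (\<beta> + \<alpha>) ^ 2)"
proof -
  define G where "G y = (x * sin (\<beta> - \<alpha>) ^ 2 + (1 - x) * sin \<beta> ^ 2) *
    ((1 - y) * sin \<beta> ^ 2 + y * sin (\<beta> + \<alpha>) ^ 2) - x * y * sin \<alpha> ^ 4" for y
  have affine: "G y * (1 - x) = (1 - x - y) * G 0 + y * G (1 - x)"
    unfolding G_def by (simp add: algebra_simps)
  have "G 0 \<ge> 0" unfolding G_def using assms by simp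
  moreover have "G (1 - x) = sin \<beta> ^ 2 * (sin \<beta> * cos \<alpha> - (2 * x - 1) * cos \<beta> * sin \<alpha>) ^ 2"
    unfolding G_def sin_diff sin_add
    using sin_cos_squared_add[of \<alpha>] sin_cos_squared_add[of \<beta>] by algebra
  ultimately have "G y * (1 - x) \<ge> 0" unfolding affine using assms by simp
  moreover have "x < 1 \<or> y = 0" using assms by auto
  ultimately have "G y \<ge> 0" using \<open>G 0 \<ge> 0\<close> by (auto simp: zero_le_mult_iff)
  then show ?thesis unfolding G_def by simp
qed

lemma norm_diff_reflection_sq:
  fixes z q W :: "'a::real_inner"
  assumes "norm W = 1"
  shows "norm (z - (q + (2 * (r - inner q W)) *\<^sub>R W)) ^ 2 =
    norm (z - q) ^ 2 - 4 * (r - inner q W) * (inner z W - r)"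
proof -
  have "inner W W = 1" using assms by (simp add: power2_norm_eq_inner[symmetric])
  then show ?thesis
    unfolding power2_norm_eq_inner
    by (simp add: inner_commute algebra_simps power2_eq_square)
qed

lemma gap_of_real_cis: "r - inner (of_real r * cis \<theta>) (cis \<nu>) = 2 * r * sin ((\<theta> - \<nu>) / 2) ^ 2"
proof -
  have c: "cos (\<theta> - \<nu>) = 1 - 2 * sin ((\<theta> - \<nu>) / 2) ^ 2"
    using cos_double_sin[of "(\<theta> - \<nu>) / 2"] by (simp only: mult_2 field_sum_of_halves)
  show ?thesis unfolding inner_of_real_cis_cis c by (simp add: algebra_simps)
qed

lemma gap_on_chord:
  "r - inner (of_real r * cis \<theta> + x *\<^sub>R (of_real r * cis \<phi> - of_real r * cis \<theta>)) (cis \<nu>) =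
    2 * r * (x * sin ((\<phi> - \<nu>) / 2) ^ 2 + (1 - x) * sin ((\<theta> - \<nu>) / 2) ^ 2)"
proof -
  have "r - inner (of_real r * cis \<theta> + x *\<^sub>R (of_real r * cis \<phi> - of_real r * cis \<theta>)) (cis \<nu>) =
      x * (r - inner (of_real r * cis \<phi>) (cis \<nu>)) + (1 - x) * (r - inner (of_real r * cis \<theta>) (cis \<nu>))"
    by (simp add: algebra_simps)
  then show ?thesis unfolding gap_of_real_cis by (simp add: algebra_simps)
qed

lemma dist_sq_points_on_adjacent_chords:
  fixes r \<mu> \<alpha> x y :: real
  defines "A \<equiv> of_real r * cis (\<mu> - 2 * \<alpha>)" and "M \<equiv> of_real r * cis \<mu>"
    and "B \<equiv> of_real r * cis (\<mu> + 2 * \<alpha>)"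
  shows "norm ((M + x *\<^sub>R (A - M)) - (M + y *\<^sub>R (B - M))) ^ 2 =
    4 * r ^ 2 * sin \<alpha> ^ 2 * (x ^ 2 + y ^ 2 + 2 * x * y * cos (2 * \<alpha>))"
proof -
  have c2: "cos (2 * \<alpha>) = 1 - 2 * sin \<alpha> ^ 2" by (rule cos_double_sin)
  have c4: "cos (4 * \<alpha>) = 1 - 8 * sin \<alpha> ^ 2 * (1 - sin \<alpha> ^ 2)"
    using cos_double_sin[of "2 * \<alpha>"] by (simp add: sin_double power_mult_distrib cos_squared_eq)
  have ip: "inner (of_real r * cis a) (of_real r * cis b) = r ^ 2 * cos (a - b)" for a b
    by (simp add: inner_of_real_cis power2_eq_square)
  have "cos (\<mu> - 2 * \<alpha> - (\<mu> + 2 * \<alpha>)) = cos (4 * \<alpha>)"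
    "cos (\<mu> + 2 * \<alpha> - (\<mu> - 2 * \<alpha>)) = cos (4 * \<alpha>)" by (simp_all add: algebra_simps)
  then have AA: "inner (A - M) (A - M) = r ^ 2 * (2 - 2 * cos (2 * \<alpha>))"
    and BB: "inner (B - M) (B - M) = r ^ 2 * (2 - 2 * cos (2 * \<alpha>))"
    and AB: "inner (A - M) (B - M) = r ^ 2 * (cos (4 * \<alpha>) - 2 * cos (2 * \<alpha>) + 1)"
    unfolding A_def M_def B_def inner_diff_left inner_diff_right ip by (simp_all add: algebra_simps)
  have "norm ((M + x *\<^sub>R (A - M)) - (M + y *\<^sub>R (B - M))) ^ 2 =
      x ^ 2 * inner (A - M) (A - M) - 2 * x * y * inner (A - M) (B - M) + y ^ 2 * inner (B - M) (B - M)"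
    unfolding power2_norm_eq_inner
    by (simp add: inner_commute power2_eq_square algebra_simps)
  then show ?thesis
    unfolding AA BB AB c4 c2 by (simp add: power2_eq_square algebra_simps)
qed

lemma norm_diff_reflected_chord_point_ge:
  fixes r \<mu> \<alpha> \<nu> x y :: real
  defines "A \<equiv> of_real r * cis (\<mu> - 2 * \<alpha>)" and "M \<equiv> of_real r * cis \<mu>"
    and "B \<equiv> of_real r * cis (\<mu> + 2 * \<alpha>)"
  assumes p: "p = M + x *\<^sub>R (A - M)" and q: "q = M + y *\<^sub>R (B - M)"
    and "0 \<le> x" "0 \<le> y" "x + y \<le> 1"
  shows "(x + y) * (2 * r * \<bar>sin \<alpha>\<bar>) \<le> norm (p - (q + (2 * (r - inner q (cis \<nu>))) *\<^sub>R cis \<nu>))"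
proof -
  define \<beta> where "\<beta> = (\<mu> - \<nu>) / 2"
  define P where "P = x * sin (\<beta> - \<alpha>) ^ 2 + (1 - x) * sin \<beta> ^ 2"
  define Q where "Q = (1 - y) * sin \<beta> ^ 2 + y * sin (\<beta> + \<alpha>) ^ 2"
  have angles: "(\<mu> - 2 * \<alpha> - \<nu>) / 2 = \<beta> - \<alpha>" "(\<mu> - \<nu>) / 2 = \<beta>"
      "(\<mu> + 2 * \<alpha> - \<nu>) / 2 = \<beta> + \<alpha>"
    unfolding \<beta>_def by (simp_all add: field_simps)
  have dp: "inner p (cis \<nu>) - r = - (2 * r * P)" and dq: "r - inner q (cis \<nu>) = 2 * r * Q"
    using gap_on_chord[of r \<mu> x "\<mu> - 2 * \<alpha>" \<nu>] gap_on_chord[of r \<mu> y "\<mu> + 2 * \<alpha>" \<nu>]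
    unfolding p q A_def M_def B_def angles P_def Q_def by (simp_all add: algebra_simps)
  have "norm (p - (q + (2 * (r - inner q (cis \<nu>))) *\<^sub>R cis \<nu>)) ^ 2 = norm (p - q) ^ 2 + 16 * r ^ 2 * P * Q"
    unfolding norm_diff_reflection_sq[OF norm_cis] unfolding dq dp
    by (simp add: power2_eq_square algebra_simps)
  also have "norm (p - q) ^ 2 = 4 * r ^ 2 * sin \<alpha> ^ 2 * (x ^ 2 + y ^ 2 + 2 * x * y * (1 - 2 * sin \<alpha> ^ 2))"
    unfolding p q A_def M_def B_def dist_sq_points_on_adjacent_chords cos_double_sin ..
  finally have reflected: "norm (p - (q + (2 * (r - inner q (cis \<nu>))) *\<^sub>R cis \<nu>)) ^ 2 =
      4 * r ^ 2 * sin \<alpha> ^ 2 * (x ^ 2 + y ^ 2 + 2 * x * y * (1 - 2 * sin \<alpha> ^ 2)) + 16 * r ^ 2 * P * Q" .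
  have "((x + y) * (2 * r * \<bar>sin \<alpha>\<bar>)) ^ 2 = 4 * r ^ 2 * sin \<alpha> ^ 2 * (x + y) ^ 2"
    by (simp add: power_mult_distrib)
  then have "norm (p - (q + (2 * (r - inner q (cis \<nu>))) *\<^sub>R cis \<nu>)) ^ 2 -
      ((x + y) * (2 * r * \<bar>sin \<alpha>\<bar>)) ^ 2 = 16 * r ^ 2 * (P * Q - x * y * sin \<alpha> ^ 4)"
    unfolding reflected by algebra
  moreover have "x * y * sin \<alpha> ^ 4 \<le> P * Q"
    unfolding P_def Q_def using sin_sq_interpolation_product_ge assms by simp
  then have "16 * r ^ 2 * (P * Q - x * y * sin \<alpha> ^ 4) \<ge> 0" by simp
  ultimately have "((x + y) * (2 * r * \<bar>sin \<alpha>\<bar>)) ^ 2 \<le>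
      norm (p - (q + (2 * (r - inner q (cis \<nu>))) *\<^sub>R cis \<nu>)) ^ 2" by linarith
  then show ?thesis by (rule power2_le_imp_le) simp
qed

lemma path_through_outer_halfplane_ge:
  fixes r \<mu> \<alpha> \<nu> x y :: real and z :: complex
  defines "A \<equiv> of_real r * cis (\<mu> - 2 * \<alpha>)" and "M \<equiv> of_real r * cis \<mu>"
    and "B \<equiv> of_real r * cis (\<mu> + 2 * \<alpha>)"
  assumes "0 \<le> r" "0 \<le> x" "0 \<le> y" "x + y \<le> 1" and outer: "inner z (cis \<nu>) \<ge> r"
  shows "(x + y) * (2 * r * \<bar>sin \<alpha>\<bar>) \<le> dist (M + x *\<^sub>R (A - M)) z + dist z (M + y *\<^sub>R (B - M))"
proof -
  define p where "p = M + x *\<^sub>R (A - M)"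
  define q where "q = M + y *\<^sub>R (B - M)"
  \<comment> \<open>the mirror image of q in the line through the edge that z lies beyond\<close>
  define q' where "q' = q + (2 * (r - inner q (cis \<nu>))) *\<^sub>R cis \<nu>"
  have "r - inner q (cis \<nu>) \<ge> 0"
    unfolding q_def B_def M_def gap_on_chord using assms by simp
  then have "norm (z - q') ^ 2 \<le> norm (z - q) ^ 2"
    unfolding q'_def norm_diff_reflection_sq[OF norm_cis] using outer by simp
  then have "norm (z - q') \<le> norm (z - q)" by (rule power2_le_imp_le) simp
  moreover have "(x + y) * (2 * r * \<bar>sin \<alpha>\<bar>) \<le> norm (p - q')"
    unfolding q'_def A_def M_def B_def
    by (rule norm_diff_reflected_chord_point_ge) (use assms p_def q_def in \<open>simp_all add: A_def M_def B_def\<close>)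
  moreover have "norm (p - q') \<le> norm (p - z) + norm (z - q')"
    using norm_triangle_ineq[of "p - z" "z - q'"] by simp
  ultimately show ?thesis unfolding p_def[symmetric] q_def[symmetric] dist_norm by linarith
qed

section \<open>Paths through the boundary\<close>

definition dist_via :: "'a::metric_space set \<Rightarrow> 'a \<Rightarrow> 'a \<Rightarrow> real" where
  "dist_via S p q = Inf {dist p w + dist w q | w. w \<in> S}"

lemma dX_eq_dist_via:
  "dX n x y = (if fst x = fst y then dist (snd x) (snd y)
               else dist_via (frontier (polygon n)) (snd x) (snd y))"
  unfolding dX_def dist_via_def ..

lemma dist_via_le: "w \<in> S \<Longrightarrow> dist_via S p q \<le> dist p w + dist w q"
  unfolding dist_via_def by (rule cInf_lower) (auto intro: bdd_belowI[of _ 0])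

lemma dist_le_dist_via: "S \<noteq> {} \<Longrightarrow> dist p q \<le> dist_via S p q"
  unfolding dist_via_def by (rule cInf_greatest) (auto intro: dist_triangle)

lemma dist_via_commute: "dist_via S p q = dist_via S q p"
proof -
  have "{dist p w + dist w q | w. w \<in> S} = {dist q w + dist w p | w. w \<in> S}"
    by (auto simp: dist_commute add.commute)
  then show ?thesis unfolding dist_via_def by simp
qed

lemma dist_via_triangle_left:
  assumes "S \<noteq> {}"
  shows "dist_via S p q \<le> dist p p' + dist_via S p' q"
proof -
  have "dist_via S p q - dist p p' \<le> dist_via S p' q"
    unfolding dist_via_def[of S p' q]
  proof (rule cInf_greatest)
    fix v assume "v \<in> {dist p' w + dist w q | w. w \<in> S}"
    then obtain w where "w \<in> S" "v = dist p' w + dist w q" by blast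
    then show "dist_via S p q - dist p p' \<le> v"
      using dist_via_le[of w S p q] dist_triangle[of p w p'] by simp
  qed (use assms in auto)
  then show ?thesis by simp
qed

lemma dist_via_triangle_right: "S \<noteq> {} \<Longrightarrow> dist_via S p q \<le> dist_via S p q' + dist q' q"
  using dist_via_triangle_left[of S q p q'] by (simp add: dist_via_commute dist_commute)

lemma dX_triangle:
  assumes "n > 0"
  shows "dX n x z \<le> dX n x y + dX n y z"
proof -
  have S: "frontier (polygon n) \<noteq> {}" using edge_mid_in_frontier[OF assms] by blast
  consider "fst x = fst y" "fst y = fst z" | "fst x = fst y" "fst y \<noteq> fst z"
    | "fst x \<noteq> fst y" "fst y = fst z" | "fst x \<noteq> fst y" "fst y \<noteq> fst z" "fst x = fst z"
    by auto
  then show ?thesis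
  proof cases
    case 4
    then show ?thesis unfolding dX_eq_dist_via
      using dist_triangle[of "snd x" "snd z" "snd y"]
        dist_le_dist_via[OF S, of "snd x" "snd y"] dist_le_dist_via[OF S, of "snd y" "snd z"] by simp
  qed (simp_all add: dX_eq_dist_via dist_triangle dist_via_triangle_left[OF S] dist_via_triangle_right[OF S])
qed

section \<open>The over-under curve\<close>

definition mid_side :: "nat \<Rightarrow> real" where
  "mid_side n = 2 * cos (pi / n) * sin (pi / n)"

lemma mid_side_pos: "n \<ge> 3 \<Longrightarrow> mid_side n > 0"
  unfolding mid_side_def using cos_pi_div_pos sin_pi_div_pos by simp

lemma mid_side_eq_abs_sin:
  assumes "\<sigma> = 1 \<or> \<sigma> = -1"
  shows "2 * cos (pi / n) * \<bar>sin (of_int \<sigma> * pi / n)\<bar> = mid_side n"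
proof -
  have "sin (pi / n) \<ge> 0"
    by (cases "n = 0") (auto intro!: sin_ge_zero simp: field_simps)
  then show ?thesis unfolding mid_side_def using assms by auto
qed

lemma edge_mid_shift:
  assumes "n > 0"
  shows "edge_mid n (m + d) =
    of_real (cos (pi / n)) * cis ((2 * of_int m + 1) * pi / n + 2 * (of_int d * pi / n))"
proof -
  have "(2 * of_int (m + d) + 1) * pi / n = (2 * of_int m + 1) * pi / n + 2 * (of_int d * pi / n)"
    using assms by (simp add: field_simps)
  then show ?thesis unfolding edge_mid_eq_edge_normal[OF assms] edge_normal_def by simp
qed

lemma dist_edge_mid_succ:
  assumes "n \<ge> 2" and "\<sigma> = 1 \<or> \<sigma> = -1"
  shows "dist (edge_mid n m) (edge_mid n (m + \<sigma>)) = mid_side n"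
proof -
  define r where "r = cos (pi / n)"
  define \<mu> where "\<mu> = (2 * of_int m + 1) * pi / n"
  define \<alpha> where "\<alpha> = of_int \<sigma> * pi / n"
  define M where "M = of_real r * cis \<mu>"
  have np: "n > 0" using assms by simp
  have "pi / n \<le> pi / 2" using assms by (intro divide_left_mono) auto
  moreover have "0 \<le> pi / n" by simp
  ultimately have "r \<ge> 0" unfolding r_def using pi_gt_zero by (intro cos_ge_zero) linarith+
  have M: "edge_mid n m = M" and B: "edge_mid n (m + \<sigma>) = of_real r * cis (\<mu> + 2 * \<alpha>)"
    unfolding M_def r_def \<mu>_def \<alpha>_def using edge_mid_shift[OF np, of m 0] edge_mid_shift[OF np]
    by simp_all
  have "norm (M - edge_mid n (m + \<sigma>)) ^ 2 = (2 * r * \<bar>sin \<alpha>\<bar>) ^ 2"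
    using dist_sq_points_on_adjacent_chords[where x = 0 and y = 1 and r = r and \<mu> = \<mu> and \<alpha> = \<alpha>]
    unfolding B M_def by (simp add: power_mult_distrib)
  then have "dist M (edge_mid n (m + \<sigma>)) = 2 * r * \<bar>sin \<alpha>\<bar>"
    unfolding dist_norm by (rule power2_eq_imp_eq) (use \<open>r \<ge> 0\<close> in simp_all)
  then show ?thesis unfolding M r_def \<alpha>_def mid_side_eq_abs_sin[OF assms(2)] .
qed

lemma path_through_frontier_ge:
  assumes "n \<ge> 3" and \<sigma>: "\<sigma> = 1 \<or> \<sigma> = -1" and "0 \<le> u'" "u' \<le> u" "u \<le> 1"
    and z: "z \<in> frontier (polygon n)"
  shows "(1 - u + u') * mid_side n \<le>
    dist (edge_mid n (m - \<sigma>) + of_real u * (edge_mid n m - edge_mid n (m - \<sigma>))) z +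
    dist z (edge_mid n m + of_real u' * (edge_mid n (m + \<sigma>) - edge_mid n m))"
proof -
  define r where "r = cos (pi / n)"
  define \<mu> where "\<mu> = (2 * of_int m + 1) * pi / n"
  define \<alpha> where "\<alpha> = of_int \<sigma> * pi / n"
  have np: "n > 0" using assms by simp
  have polar: "edge_mid n (m - \<sigma>) = of_real r * cis (\<mu> - 2 * \<alpha>)" "edge_mid n m = of_real r * cis \<mu>"
      "edge_mid n (m + \<sigma>) = of_real r * cis (\<mu> + 2 * \<alpha>)"
    unfolding r_def \<mu>_def \<alpha>_def
    using edge_mid_shift[OF np, of m "- \<sigma>"] edge_mid_shift[OF np, of m 0] edge_mid_shift[OF np, of m \<sigma>]
    by simp_all
  obtain f where "inner z (cis ((2 * of_int f + 1) * pi / n)) \<ge> r"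
    using frontier_polygon_inner_edge_normal_ge[OF assms(1) z] unfolding edge_normal_def r_def ..
  moreover have "r \<ge> 0" unfolding r_def using cos_pi_div_pos[OF assms(1)] by simp
  ultimately have "((1 - u) + u') * (2 * r * \<bar>sin \<alpha>\<bar>) \<le>
      dist (of_real r * cis \<mu> + (1 - u) *\<^sub>R (of_real r * cis (\<mu> - 2 * \<alpha>) - of_real r * cis \<mu>)) z +
      dist z (of_real r * cis \<mu> + u' *\<^sub>R (of_real r * cis (\<mu> + 2 * \<alpha>) - of_real r * cis \<mu>))"
    by (intro path_through_outer_halfplane_ge) (use assms in auto)
  then show ?thesis
    unfolding polar r_def \<alpha>_def mid_side_eq_abs_sin[OF \<sigma>] by (simp add: scaleR_conv_of_real algebra_simps)
qed

lemma dist_via_frontier_adjacent_segments: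
  assumes "n \<ge> 3" and \<sigma>: "\<sigma> = 1 \<or> \<sigma> = -1" and "0 \<le> u'" "u' \<le> u" "u \<le> 1"
  shows "dist_via (frontier (polygon n))
      (edge_mid n (m - \<sigma>) + of_real u * (edge_mid n m - edge_mid n (m - \<sigma>)))
      (edge_mid n m + of_real u' * (edge_mid n (m + \<sigma>) - edge_mid n m))
    = (1 - u + u') * mid_side n"
proof -
  define A where "A = edge_mid n (m - \<sigma>)"
  define M where "M = edge_mid n m"
  define B where "B = edge_mid n (m + \<sigma>)"
  define p where "p = A + of_real u * (M - A)"
  define q where "q = M + of_real u' * (B - M)"
  have "dist A M = mid_side n" "dist M B = mid_side n"
    using dist_edge_mid_succ[OF _ \<sigma>, of n "m - \<sigma>"] dist_edge_mid_succ[OF _ \<sigma>, of n m] assms(1)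
    unfolding A_def M_def B_def by simp_all
  moreover have "p - M = (1 - u) *\<^sub>R (A - M)" "M - q = u' *\<^sub>R (M - B)"
    unfolding p_def q_def by (simp_all add: scaleR_conv_of_real algebra_simps)
  ultimately have "dist p M = (1 - u) * mid_side n" "dist M q = u' * mid_side n"
    using assms by (simp_all add: dist_norm)
  then have "dist p M + dist M q = (1 - u + u') * mid_side n" by (simp add: algebra_simps)
  moreover have "M \<in> frontier (polygon n)" unfolding M_def using assms(1) by (simp add: edge_mid_in_frontier)
  moreover have "(1 - u + u') * mid_side n \<le> dist p z + dist z q" if "z \<in> frontier (polygon n)" for z
    unfolding p_def q_def A_def M_def B_def using path_through_frontier_ge[OF assms that] .
  ultimately show ?thesis
    unfolding dist_via_def A_def[symmetric] M_def[symmetric] B_def[symmetric]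
      p_def[symmetric] q_def[symmetric]
    by (intro cInf_eq_minimum) (auto intro!: exI[of _ M])
qed

lemma over_under_base_eq:
  "over_under_base n j \<sigma> b s = (b \<noteq> odd \<lfloor>s\<rfloor>,
     edge_mid n (j + \<sigma> * \<lfloor>s\<rfloor>) + of_real (s - of_int \<lfloor>s\<rfloor>) *
       (edge_mid n (j + \<sigma> * \<lfloor>s\<rfloor> + \<sigma>) - edge_mid n (j + \<sigma> * \<lfloor>s\<rfloor>)))"
  unfolding over_under_base_def Let_def by (simp add: algebra_simps)

lemma dX_over_under_base_near:
  assumes "n \<ge> 3" and \<sigma>: "\<sigma> = 1 \<or> \<sigma> = -1" and "t \<le> t'" "t' \<le> t + 1"
  shows "dX n (over_under_base n j \<sigma> b t) (over_under_base n j \<sigma> b t') = (t' - t) * mid_side n"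
proof -
  define k where "k = \<lfloor>t\<rfloor>"
  define m where "m = j + \<sigma> * k + \<sigma>"
  have "k \<le> \<lfloor>t'\<rfloor>" "\<lfloor>t'\<rfloor> \<le> k + 1" unfolding k_def using assms(3,4) by linarith+
  then consider (same) "\<lfloor>t'\<rfloor> = k" | (succ) "\<lfloor>t'\<rfloor> = k + 1" by linarith
  then show ?thesis
  proof cases
    case same
    let ?\<gamma> = "over_under_base n j \<sigma> b"
    define D where "D = edge_mid n (j + \<sigma> * k + \<sigma>) - edge_mid n (j + \<sigma> * k)"
    have "norm D = mid_side n"
      using dist_edge_mid_succ[OF _ \<sigma>, of n "j + \<sigma> * k"] assms(1)
      unfolding D_def dist_norm by (simp only: norm_minus_commute)
    have "fst (?\<gamma> t) = fst (?\<gamma> t')" "snd (?\<gamma> t') - snd (?\<gamma> t) = of_real (t' - t) * D"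
      unfolding over_under_base_eq same k_def[symmetric] D_def[symmetric] by (simp_all add: algebra_simps)
    then have "dX n (?\<gamma> t) (?\<gamma> t') = norm (of_real (t' - t) * D)"
      unfolding dX_def by (simp add: dist_norm norm_minus_commute[of "snd (?\<gamma> t)"])
    then show ?thesis using assms(3) \<open>norm D = mid_side n\<close> by (simp only: norm_mult norm_of_real)
  next
    case succ
    have "j + \<sigma> * (k + 1) = m" "j + \<sigma> * k = m - \<sigma>" unfolding m_def by (simp_all add: algebra_simps)
    then have "dX n (over_under_base n j \<sigma> b t) (over_under_base n j \<sigma> b t') =
        dist_via (frontier (polygon n))
          (edge_mid n (m - \<sigma>) + of_real (t - of_int k) * (edge_mid n m - edge_mid n (m - \<sigma>)))
          (edge_mid n m + of_real (t' - of_int (k + 1)) * (edge_mid n (m + \<sigma>) - edge_mid n m))"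
      unfolding dX_eq_dist_via over_under_base_eq succ k_def[symmetric] by auto
    also have "\<dots> = (1 - (t - of_int k) + (t' - of_int (k + 1))) * mid_side n"
      using succ assms(3,4) unfolding k_def
      by (intro dist_via_frontier_adjacent_segments[OF assms(1) \<sigma>]) linarith+
    finally show ?thesis by simp
  qed
qed

lemma dX_le_of_local_le:
  assumes "n > 0" and "h > 0"
    and local: "\<And>s t. s \<le> t \<Longrightarrow> t \<le> s + h \<Longrightarrow> dX n (g s) (g t) \<le> K * (t - s)"
    and "s \<le> t"
  shows "dX n (g s) (g t) \<le> K * (t - s)"
proof -
  have "dX n (g s) (g t) \<le> K * (t - s)" if "s \<le> t" "t \<le> s + real i * h" for i s
    using that
  proof (induction i arbitrary: s)
    case 0
    then show ?case using local[of s s] assms(2) by simp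
  next
    case (Suc i)
    show ?case
    proof (cases "t \<le> s + h")
      case True
      then show ?thesis using local Suc.prems by simp
    next
      case False
      have "dX n (g s) (g t) \<le> dX n (g s) (g (s + h)) + dX n (g (s + h)) (g t)"
        by (rule dX_triangle[OF assms(1)])
      also have "\<dots> \<le> K * h + K * (t - (s + h))"
        using local[of s "s + h"] Suc.IH[of "s + h"] Suc.prems False assms(2)
        by (simp add: algebra_simps)
      finally show ?thesis by (simp add: algebra_simps)
    qed
  qed
  moreover have "(t - s) / h \<le> real (nat \<lceil>(t - s) / h\<rceil>)" by linarith
  then have "t \<le> s + real (nat \<lceil>(t - s) / h\<rceil>) * h" using assms(2) by (simp add: divide_le_eq)
  ultimately show ?thesis using assms(4) by blast
qed

lemma curve_length_eq_linear:
  assumes "n > 0" and h: "h > 0"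
    and eq: "\<And>s t. s \<le> t \<Longrightarrow> t \<le> s + h \<Longrightarrow> dX n (g s) (g t) = K * (t - s)"
    and "a \<le> b"
  shows "curve_length n g a b = K * (b - a)"
  unfolding curve_length_def
proof (rule cSup_eq_maximum)
  define m where "m = nat \<lceil>(b - a) / h\<rceil> + 1"
  define d where "d = (b - a) / m"
  define t where "t i = a + real i * d" for i
  have "real m > 0" "(b - a) / h \<le> real m" unfolding m_def by linarith+
  then have m: "real m > 0" "d \<le> h" "0 \<le> d"
    using h \<open>a \<le> b\<close> unfolding d_def by (simp_all add: field_simps)
  have step: "t (Suc i) - t i = d" for i unfolding t_def by (simp add: algebra_simps)
  have "dX n (g (t i)) (g (t (Suc i))) = K * d" for i
    using eq[of "t i" "t (Suc i)"] step[of i] m by simp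
  then have "(\<Sum>i<m. dX n (g (t i)) (g (t (Suc i)))) = (\<Sum>i<m. K * d)" by simp
  also have "\<dots> = K * (b - a)" using m unfolding d_def by simp
  finally have "(\<Sum>i<m. dX n (g (t i)) (g (t (Suc i)))) = K * (b - a)" .
  moreover have "t 0 = a" "t m = b" unfolding t_def d_def using m by simp_all
  moreover have "\<forall>i<m. t i \<le> t (Suc i)" using step m by (simp add: algebra_simps)
  ultimately show "K * (b - a) \<in> {\<Sum>i<m. dX n (g (t i)) (g (t (Suc i))) | t m.
      t 0 = a \<and> t m = b \<and> (\<forall>i<m. t i \<le> t (Suc i))}"
    unfolding mem_Collect_eq by (intro exI[of _ t] exI[of _ m]) simp
next
  fix x assume "x \<in> {\<Sum>i<m. dX n (g (t i)) (g (t (Suc i))) | t m.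
      t 0 = a \<and> t m = b \<and> (\<forall>i<m. t i \<le> t (Suc i))}"
  then obtain t m where x: "x = (\<Sum>i<m. dX n (g (t i)) (g (t (Suc i))))"
    and t: "t 0 = a" "t m = b" "\<forall>i<m. t i \<le> t (Suc i)"
    by blast
  have "dX n (g (t i)) (g (t (Suc i))) \<le> K * (t (Suc i) - t i)" if "i < m" for i
    using dX_le_of_local_le[OF assms(1,2), of g K] eq t(3) that by simp
  then have "x \<le> (\<Sum>i<m. K * (t (Suc i) - t i))" unfolding x by (intro sum_mono) simp
  also have "\<dots> = K * (b - a)"
    using t by (simp add: sum_distrib_left[symmetric] sum_lessThan_telescope)
  finally show "x \<le> K * (b - a)" .
qed

lemma edge_mid_add_multiple:
  assumes "n > 0"
  shows "edge_mid n (e + int n * m) = edge_mid n e"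
  using vertex_add_multiple[OF assms, of e m] vertex_add_multiple[OF assms, of "e + 1" m]
  unfolding edge_mid_def by (simp add: algebra_simps)

lemma over_under_base_add_num_segments:
  assumes "n > 0"
  shows "over_under_base n j \<sigma> b (s + real (num_segments n)) = over_under_base n j \<sigma> b s"
proof -
  define N where "N = int (num_segments n)"
  define c where "c = (if even n then 1 else 2 :: int)"
  have N: "N = int n * c" "even N" unfolding N_def c_def num_segments_def by simp_all
  have floor: "\<lfloor>s + real (num_segments n)\<rfloor> = \<lfloor>s\<rfloor> + N" unfolding N_def by simp
  have "edge_mid n (j + \<sigma> * (\<lfloor>s\<rfloor> + N)) = edge_mid n (j + \<sigma> * \<lfloor>s\<rfloor>)"
    "edge_mid n (j + \<sigma> * (\<lfloor>s\<rfloor> + N) + \<sigma>) = edge_mid n (j + \<sigma> * \<lfloor>s\<rfloor> + \<sigma>)"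
    using edge_mid_add_multiple[OF assms, of "j + \<sigma> * \<lfloor>s\<rfloor>" "\<sigma> * c"]
      edge_mid_add_multiple[OF assms, of "j + \<sigma> * \<lfloor>s\<rfloor> + \<sigma>" "\<sigma> * c"]
    unfolding N(1) by (simp_all add: algebra_simps)
  then show ?thesis unfolding over_under_base_eq floor using N(2) by (simp add: N_def)
qed

lemma over_under_base_in_polygon:
  assumes "n > 0"
  shows "snd (over_under_base n j \<sigma> b s) \<in> polygon n"
proof -
  define u where "u = s - of_int \<lfloor>s\<rfloor>"
  have "0 \<le> u" "u \<le> 1" unfolding u_def by linarith+
  then have "(1 - u) *\<^sub>R edge_mid n (j + \<sigma> * \<lfloor>s\<rfloor>) + u *\<^sub>R edge_mid n (j + \<sigma> * \<lfloor>s\<rfloor> + \<sigma>) \<in> polygon n"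
    by (intro convexD[OF convex_polygon] edge_mid_in_polygon[OF assms]) auto
  then show ?thesis
    unfolding over_under_base_eq u_def[symmetric] by (simp add: scaleR_conv_of_real algebra_simps)
qed

lemma closed_curve_over_under:
  assumes "n > 0"
  shows "closed_curve n (over_under n j \<sigma> b c)"
  unfolding closed_curve_def
proof (intro conjI allI)
  fix t
  show "over_under n j \<sigma> b c t \<in> XN n"
    using over_under_base_in_polygon[OF assms] unfolding XN_def over_under_def
    by (simp add: case_prod_beta)
  have "over_under n j \<sigma> b c (t + 1) =
      over_under_base n j \<sigma> b ((num_segments n * t + c) + real (num_segments n))"
    unfolding over_under_def by (simp add: algebra_simps)
  then show "over_under n j \<sigma> b c (t + 1) = over_under n j \<sigma> b c t"
    unfolding over_under_base_add_num_segments[OF assms] over_under_def .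
qed

lemma dX_over_under_near:
  assumes "n \<ge> 3" and "\<sigma> = 1 \<or> \<sigma> = -1" and "s \<le> t" "t \<le> s + 1 / num_segments n"
  shows "dX n (over_under n j \<sigma> b c s) (over_under n j \<sigma> b c t) =
    (num_segments n * mid_side n) * (t - s)"
proof -
  have "real (num_segments n) > 0" using assms(1) unfolding num_segments_def by simp
  then have "num_segments n * s + c \<le> num_segments n * t + c"
    "num_segments n * t + c \<le> (num_segments n * s + c) + 1"
    using assms(3,4) by (simp_all add: field_simps)
  then show ?thesis
    using dX_over_under_base_near[OF assms(1,2), of "num_segments n * s + c" "num_segments n * t + c"]
    unfolding over_under_def by (simp add: algebra_simps)
qed

lemma curve_length_over_under:
  assumes "n \<ge> 3" and "\<sigma> = 1 \<or> \<sigma> = -1" and "s \<le> t"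
  shows "curve_length n (over_under n j \<sigma> b c) s t = (num_segments n * mid_side n) * (t - s)"
proof (rule curve_length_eq_linear)
  show "1 / real (num_segments n) > 0" using assms(1) unfolding num_segments_def by simp
qed (use dX_over_under_near[OF assms(1,2)] assms(1,3) in auto)

lemma over_under_one_over_k_geodesic:
  assumes "n \<ge> 3" and "\<sigma> = 1 \<or> \<sigma> = -1"
  shows "one_over_k_geodesic n (over_under n j \<sigma> b c) (num_segments n)"
proof -
  define \<gamma> where "\<gamma> = over_under n j \<sigma> b c"
  define N where "N = real (num_segments n)"
  have N: "N > 0" using assms(1) unfolding N_def num_segments_def by simp
  have length: "curve_length n \<gamma> s t = (N * mid_side n) * (t - s)" if "s \<le> t" for s t
    unfolding \<gamma>_def N_def using curve_length_over_under[OF assms that] .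
  have near: "dX n (\<gamma> s) (\<gamma> t) = (N * mid_side n) * (t - s)" if "s \<le> t" "t \<le> s + 1 / N" for s t
    unfolding \<gamma>_def N_def using dX_over_under_near[OF assms that[unfolded N_def]] .
  have total: "total_length n \<gamma> = N * mid_side n" unfolding total_length_def using length[of 0 1] by simp
  show ?thesis
    unfolding one_over_k_geodesic_def closed_geodesic_def constant_speed_def
      \<gamma>_def[symmetric] N_def[symmetric]
  proof (intro conjI allI impI)
    show "closed_curve n \<gamma>" unfolding \<gamma>_def using closed_curve_over_under assms(1) by simp
    show "0 < total_length n \<gamma>" unfolding total using N mid_side_pos[OF assms(1)] by simp
    show "curve_length n \<gamma> s t = (t - s) * total_length n \<gamma>" if "s \<le> t" for s t
      unfolding total length[OF that] by simp
    show "curve_length n \<gamma> a (a + 1 / N) = dX n (\<gamma> a) (\<gamma> (a + 1 / N))" for a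
      using length[of a "a + 1 / N"] near[of a "a + 1 / N"] N by simp
    show "locally_minimizing_at n \<gamma> t" for t
      unfolding locally_minimizing_at_def
    proof (intro exI[of _ "1 / (2 * N)"] conjI allI impI)
      fix a b assume "t - 1 / (2 * N) \<le> a" "a \<le> b" "b \<le> t + 1 / (2 * N)"
      moreover have "1 / (2 * N) + 1 / (2 * N) = 1 / N" by simp
      ultimately have "a \<le> b" "b \<le> a + 1 / N" by linarith+
      then show "curve_length n \<gamma> a b = dX n (\<gamma> a) (\<gamma> b)"
        using length near by simp
    qed (use N in simp)
  qed
qed

theorem mainTheorem1:
  fixes n :: nat and j \<sigma> :: int and b :: bool and c :: real
  assumes "n \<ge> 3" and "\<sigma> = 1 \<or> \<sigma> = -1"
  shows "(even n \<longrightarrow> one_over_k_geodesic n (over_under n j \<sigma> b c) n) \<and>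
         (odd n \<longrightarrow> one_over_k_geodesic n (over_under n j \<sigma> b c) (2 * n))"
  using over_under_one_over_k_geodesic[OF assms, of j b c] unfolding num_segments_def
  by (cases "even n") simp_all

end
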